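(* Let $G$ be a non-abelian subgroup of $\mathcal{H}(n,\mathbb{C})$ with $\Lambda_G\not\subset\mathbb{R}$, $G\not\subset\mathcal{SR}_n$, and suppose $U:=\mathbb{C}^n\setminus E_G\neq\emptyset$. Then: (i) every orbit $G(z)$ with $z\in U$ is minimal in $U$, i.e. $\overline{G(w)}\cap U=\overline{G(z)}\cap U$ for every $w\in\overline{G(z)}\cap U$; (ii) if moreover $G\not\subset\mathcal{R}_n$, then $E_G$ is a minimal set of $G$ in $\mathbb{C}^n$ (a nonempty closed $G$-invariant set containing no proper nonempty closed $G$-invariant subset) and $E_G\subset\overline{G(z)}$ for every $z\in\mathbb{C}^n$; (iii) any two orbits $G(z)$, $G(y)$ with $z,y\in U$ are homeomorphic.
   Context: $\mathcal{H}(n,\mathbb{C})$ is the group of all maps $z\mapsto\lambda z+b$ of $\mathbb{C}^n$ with $\lambda\in\mathbb{C}^*$, $b\in\mathbb{C}^n$ ($\lambda$ = ratio). $\mathcal{T}_n$ = translations; $\mathcal{R}_n$ = elements whose ratio has modulus $1$. Every element of $\mathcal{H}(n,\mathbb{C})\setminus\mathcal{T}_n$ has a unique fixed point, its center. $H_2=(\frac{\pi}{2}+\pi\mathbb{Z})\cup\pi\mathbb{Z}$, $F_2=\{e^{ix}:x\in H_2\}$, $H_3=(\frac{\pi}{3}+\pi\mathbb{Z})\cup(-\frac{\pi}{3}+\pi\mathbb{Z})\cup\pi\mathbb{Z}$, $F_3=\{e^{ix}:x\in H_3\}$; $\mathcal{S}_i\mathcal{R}_n=\{z\mapsto\lambda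 z+b:\lambda\in F_i, b\in\mathbb{C}^n\}$, $\mathcal{SR}_n=\mathcal{S}_2\mathcal{R}_n\cup\mathcal{S}_3\mathcal{R}_n$. For a subgroup $G$: $G(z)$ is the orbit of $z$; $\Lambda_G$ the set of ratios of elements of $G$; $\Gamma_G$ the set of centers of elements of $G\setminus\mathcal{T}_n$; $E_G$ the smallest complex affine subspace of $\mathbb{C}^n$ containing $\Gamma_G$. Bars denote closure. *)

theory Defs
  imports "HOL-Analysis.Analysis"
begin

text \<open>Points of C^n are vectors of type complex ^ 'n ('n a finite index type, n = CARD('n)).
  Elements of H(n,C) are represented as the maps themselves.\<close>

definition homothety_maps :: "(complex^'n \<Rightarrow> complex^'n) set" where
  "homothety_maps = {f. \<exists>(l::complex) b. l \<noteq> 0 \<and> f = (\<lambda>z. l *s z + b)}"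

definition ratio :: "(complex^'n \<Rightarrow> complex^'n) \<Rightarrow> complex" where
  "ratio f = (THE l. \<exists>b. f = (\<lambda>z. l *s z + b))"

definition is_subgroup_H :: "(complex^'n \<Rightarrow> complex^'n) set \<Rightarrow> bool" where
  "is_subgroup_H G \<longleftrightarrow> G \<subseteq> homothety_maps \<and> id \<in> G \<and>
     (\<forall>f\<in>G. \<forall>g\<in>G. f \<circ> g \<in> G) \<and> (\<forall>f\<in>G. inv f \<in> G)"

definition transl_maps :: "(complex^'n \<Rightarrow> complex^'n) set" where
  "transl_maps = {f \<in> homothety_maps. ratio f = 1}"

definition rot_maps :: "(complex^'n \<Rightarrow> complex^'n) set" where
  "rot_maps = {f \<in> homothety_maps. cmod (ratio f) = 1}"

definition H2 :: "real set" where
  "H2 = {pi/2 + pi * of_int k | k. True} \<union> {pi * of_int k | k. True}"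

definition H3 :: "real set" where
  "H3 = {pi/3 + pi * of_int k | k. True} \<union> {- pi/3 + pi * of_int k | k. True}
        \<union> {pi * of_int k | k. True}"

definition F2 :: "complex set" where
  "F2 = {exp (\<i> * complex_of_real x) | x. x \<in> H2}"

definition F3 :: "complex set" where
  "F3 = {exp (\<i> * complex_of_real x) | x. x \<in> H3}"

definition S2R :: "(complex^'n \<Rightarrow> complex^'n) set" where
  "S2R = {f. \<exists>l b. l \<in> F2 \<and> f = (\<lambda>z. l *s z + b)}"

definition S3R :: "(complex^'n \<Rightarrow> complex^'n) set" where
  "S3R = {f. \<exists>l b. l \<in> F3 \<and> f = (\<lambda>z. l *s z + b)}"

definition SR :: "(complex^'n \<Rightarrow> complex^'n) set" where
  "SR = S2R \<union> S3R"

definition orbit :: "(complex^'n \<Rightarrow> complex^'n) set \<Rightarrow> complex^'n \<Rightarrow> (complex^'n) set" where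
  "orbit G z = {f z | f. f \<in> G}"

definition ratios :: "(complex^'n \<Rightarrow> complex^'n) set \<Rightarrow> complex set" where
  "ratios G = ratio ` G"

text \<open>Centers of elements of G that are not transl_maps (each such element has a unique fixed point).\<close>
definition centers :: "(complex^'n \<Rightarrow> complex^'n) set \<Rightarrow> (complex^'n) set" where
  "centers G = {c. \<exists>f \<in> G - transl_maps. f c = c}"

definition complex_affine :: "(complex^'n) set \<Rightarrow> bool" where
  "complex_affine S \<longleftrightarrow> (\<forall>x\<in>S. \<forall>y\<in>S. \<forall>u::complex. (1 - u) *s x + u *s y \<in> S)"

definition E_G :: "(complex^'n \<Rightarrow> complex^'n) set \<Rightarrow> (complex^'n) set" where
  "E_G G = \<Inter>{A. complex_affine A \<and> centers G \<subseteq> A}"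

definition invariant_set :: "(complex^'n \<Rightarrow> complex^'n) set \<Rightarrow> (complex^'n) set \<Rightarrow> bool" where
  "invariant_set G A \<longleftrightarrow> (\<forall>f\<in>G. f ` A \<subseteq> A)"

definition minimal_set :: "(complex^'n \<Rightarrow> complex^'n) set \<Rightarrow> (complex^'n) set \<Rightarrow> bool" where
  "minimal_set G M \<longleftrightarrow> M \<noteq> {} \<and> closed M \<and> invariant_set G M \<and>
     (\<forall>A. A \<noteq> {} \<and> closed A \<and> A \<subseteq> M \<and> invariant_set G A \<longrightarrow> A = M)"

end

theory Submission
  imports Defs
begin

(*
  1. E_G is a closed complex affine subspace which G maps into itself; it is nonempty as soon
     as G contains an element with non-real ratio, because such an element has a center.
  2. If f, g \<in> G have different ratios, then inv f \<circ> g has a center p \<in> E_G and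
     f x - g x = (ratio f - ratio g)(x - p).  Hence for z \<notin> E_G the distance |f y - g y| is
     bounded by (1 + |y - z| / d(z, E_G)) |f z - g z|, so f z \<mapsto> f y is a well-defined
     Lipschitz map from the orbit of z onto the orbit of y: this gives (iii).  Moreover
     d(f z, E_G) \<le> |ratio f| d(z, E_G), so an element moving z close to a point w \<notin> E_G has
     ratio bounded below and its inverse moves w close to z: this gives (i).
  3. If G contains a contraction and an element with non-real ratio, the ratios of G generate
     a dense subring of C which acts on the closure D of the group of translation vectors of G,
     so D is a complex subspace; commutators of two elements with centers c, c' are
     translations by nonzero multiples of c - c', whence E_G \<subseteq> c + D.  Iterating the
     contraction (centered at c) and then translating by a vector of D brings every point
     arbitrarily close to any point of E_G, which gives (ii).
*)


section \<open>Homotheties of C^n\<close>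

definition homothety :: "complex \<Rightarrow> complex^'n \<Rightarrow> complex^'n \<Rightarrow> complex^'n" where
  "homothety l b = (\<lambda>z. l *s z + b)"

lemma homothety_apply [simp]: "homothety l b z = l *s z + b"
  by (simp add: homothety_def)

lemma homothety_eqD:
  assumes "homothety l b = homothety l' b'"
  shows "l = l' \<and> b = b'"
proof -
  have b: "b = b'" using fun_cong[OF assms, of 0] by simp
  have "l *s vec 1 = l' *s (vec 1 :: complex^'n)"
    using fun_cong[OF assms, of "vec 1"] b by simp
  then show ?thesis using b by (simp add: vec_eq_iff)
qed

lemma ratio_homothety [simp]: "ratio (homothety l b) = l"
  unfolding ratio_def
proof (rule the_equality)
  show "\<exists>b'. homothety l b = (\<lambda>z. l *s z + b')" by (auto simp: homothety_def)
next
  fix l' assume "\<exists>b'. homothety l b = (\<lambda>z. l' *s z + b')"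
  then obtain b' where "homothety l b = homothety l' b'" by (auto simp: homothety_def)
  then show "l' = l" using homothety_eqD by blast
qed

lemma homothety_mapsE:
  assumes "f \<in> homothety_maps"
  obtains l b where "l \<noteq> 0" "f = homothety l b"
  using assms by (auto simp: homothety_maps_def homothety_def)

lemma homothety_comp: "homothety l b \<circ> homothety m c = homothety (l * m) (l *s c + b)"
  by (rule ext) (simp add: vec_eq_iff field_simps)

lemma homothety_inv: "l \<noteq> 0 \<Longrightarrow> inv (homothety l b) = homothety (1 / l) (- ((1 / l) *s b))"
  by (rule inv_equality) (simp_all add: vec_eq_iff field_simps)

lemma id_homothety: "id = homothety 1 0"
  by (rule ext) (simp add: vec_eq_iff)

lemma homothety_centered:
  fixes l :: complex and b :: "complex^'n"
  assumes "l \<noteq> 1"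
  obtains c where "b = (1 - l) *s c"
proof
  show "b = (1 - l) *s ((1 / (1 - l)) *s b)" using assms by (simp add: vec_eq_iff)
qed

lemma homothety_fixes_center: "homothety l ((1 - l) *s c) c = c"
  by (simp add: vec_eq_iff algebra_simps)

lemma homothety_iterate:
  "homothety l ((1 - l) *s c) ^^ k = homothety (l ^ k) ((1 - l ^ k) *s c)"
proof (induction k)
  case 0
  show ?case by (simp add: id_homothety)
next
  case (Suc k)
  have "homothety l ((1 - l) *s c) ^^ Suc k
          = homothety l ((1 - l) *s c) \<circ> homothety l ((1 - l) *s c) ^^ k"
    by simp
  also have "\<dots> = homothety l ((1 - l) *s c) \<circ> homothety (l ^ k) ((1 - l ^ k) *s c)"
    by (simp only: Suc)
  also have "\<dots> = homothety (l ^ Suc k) ((1 - l ^ Suc k) *s c)"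
    by (rule ext) (simp add: vec_eq_iff algebra_simps)
  finally show ?case .
qed

lemma norm_smult: "norm (c *s (x::complex^'n)) = norm c * norm x"
  unfolding norm_vec_def by (simp add: L2_set_right_distrib norm_mult)

lemma dist_homothety: "dist (homothety l b x) (homothety l b y) = norm l * dist x y"
proof -
  have "homothety l b x - homothety l b y = l *s (x - y)"
    by (simp add: vec_eq_iff field_simps)
  then show ?thesis by (simp only: dist_norm norm_smult)
qed

lemma continuous_on_smult [continuous_intros]:
  fixes f :: "'a::topological_space \<Rightarrow> complex" and g :: "'a \<Rightarrow> complex^'n"
  assumes "continuous_on S f" "continuous_on S g"
  shows "continuous_on S (\<lambda>x. f x *s g x)"
proof -
  have "(\<lambda>x. f x *s g x) = (\<lambda>x. \<chi> i. f x * g x $ i)" by (rule ext) (simp add: vec_eq_iff)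
  then show ?thesis by (simp only:) (intro continuous_intros assms)
qed

lemma continuous_on_homothety: "continuous_on S (homothety l b)"
  unfolding homothety_def by (intro continuous_intros)


section \<open>Complex affine subspaces and the set E_G\<close>

lemma scaleR_as_smult: "r *\<^sub>R (x::complex^'n) = complex_of_real r *s x"
proof (rule vec_eq_iff[THEN iffD2], rule allI)
  fix i
  show "(r *\<^sub>R x) $ i = (complex_of_real r *s x) $ i"
    by (subst vector_scaleR_component) (simp add: scaleR_conv_of_real)
qed

(* Complex affine sets are in particular real affine, hence closed. *)
lemma complex_affine_imp_affine: "complex_affine S \<Longrightarrow> affine S"
  unfolding complex_affine_def affine_def
proof (intro ballI allI impI)
  fix x y u v
  assume S: "\<forall>x\<in>S. \<forall>y\<in>S. \<forall>u::complex. (1 - u) *s x + u *s y \<in> S"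
    and x: "x \<in> S" and y: "y \<in> S" and uv: "u + v = (1::real)"
  have "complex_of_real u = 1 - complex_of_real v"
    using uv by (metis add_diff_cancel_right' of_real_1 of_real_add)
  then show "u *\<^sub>R x + v *\<^sub>R y \<in> S" using S x y by (simp add: scaleR_as_smult)
qed

lemma E_G_complex_affine: "complex_affine (E_G G)"
  unfolding E_G_def complex_affine_def by blast

lemma centers_subset_E_G: "centers G \<subseteq> E_G G"
  unfolding E_G_def by blast

lemma closed_E_G: "closed (E_G G)"
  by (intro affine_closed complex_affine_imp_affine E_G_complex_affine)

lemma E_G_least: "complex_affine A \<Longrightarrow> centers G \<subseteq> A \<Longrightarrow> E_G G \<subseteq> A"
  unfolding E_G_def by blast


section \<open>Dense subsets of C\<close>

(* A set of complex numbers closed under sums, products and integer multiples, containing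
   all powers of some \<nu> with 0 < |\<nu>| < 1 and a non-real number lam, is dense: the lattice
   Z a + Z lam a with a = \<nu>^k small is (1 + |lam|)|a|-dense in C. *)
lemma dense_complex_lattice:
  fixes M :: "complex set"
  assumes add: "\<And>a b. a \<in> M \<Longrightarrow> b \<in> M \<Longrightarrow> a + b \<in> M"
    and mult: "\<And>a b. a \<in> M \<Longrightarrow> b \<in> M \<Longrightarrow> a * b \<in> M"
    and int_mult: "\<And>k a. a \<in> M \<Longrightarrow> of_int k * a \<in> M"
    and nu: "\<And>k. \<nu> ^ k \<in> M" "\<nu> \<noteq> 0" "norm \<nu> < 1"
    and lam: "lam \<in> M" "Im lam \<noteq> 0"
  shows "closure M = UNIV"
proof -
  have "x \<in> closure M" for x
    unfolding closure_approachable
  proof (intro allI impI)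
    fix e :: real assume e: "e > 0"
    obtain k where k: "norm \<nu> ^ k < e / (1 + norm lam)"
      using real_arch_pow_inv[of "e / (1 + norm lam)" "norm \<nu>"] nu e
      by (auto simp: add_pos_nonneg)
    define a where "a = \<nu> ^ k"
    have a: "a \<in> M" "a \<noteq> 0" "norm a * (1 + norm lam) < e"
      unfolding a_def using nu k
      by (auto simp: norm_power pos_less_divide_eq add_pos_nonneg)
    define t where "t = Im (x / a) / Im lam"
    define s where "s = Re (x / a) - t * Re lam"
    have "x / a = complex_of_real s + complex_of_real t * lam"
      using lam(2) unfolding s_def t_def by (simp add: complex_eq_iff field_simps)
    then have x: "x = (complex_of_real s + complex_of_real t * lam) * a"
      using a(2) by (metis nonzero_divide_eq_eq)
    define r where "r = of_int \<lfloor>s\<rfloor> * a + of_int \<lfloor>t\<rfloor> * (lam * a)"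
    have r: "r \<in> M"
      unfolding r_def using add int_mult mult a lam by blast
    define A where "A = of_int \<lfloor>s\<rfloor> - s"
    define B where "B = of_int \<lfloor>t\<rfloor> - t"
    have A: "\<bar>A\<bar> \<le> 1" and B: "\<bar>B\<bar> \<le> 1"
      unfolding A_def B_def using floor_correct[of s] floor_correct[of t] by linarith+
    have "r - x = (complex_of_real A + complex_of_real B * lam) * a"
      unfolding r_def x A_def B_def by (simp add: algebra_simps)
    then have "dist r x = norm (complex_of_real A + complex_of_real B * lam) * norm a"
      by (simp only: dist_norm norm_mult)
    also have "\<dots> \<le> (\<bar>A\<bar> + \<bar>B\<bar> * norm lam) * norm a"
    proof (rule mult_right_mono)
      show "norm (complex_of_real A + complex_of_real B * lam) \<le> \<bar>A\<bar> + \<bar>B\<bar> * norm lam"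
        using norm_triangle_ineq[of "complex_of_real A" "complex_of_real B * lam"]
        by (simp add: norm_mult)
    qed simp
    also have "\<dots> \<le> (1 + norm lam) * norm a"
      using A B by (intro mult_right_mono add_mono mult_left_le_one_le) simp_all
    also have "\<dots> < e" using a(3) by (simp add: mult.commute)
    finally show "\<exists>r\<in>M. dist r x < e" using r by blast
  qed
  then show ?thesis by blast
qed


section \<open>Transferring points between two orbits\<close>

definition orbit_transfer ::
    "(complex^'n \<Rightarrow> complex^'n) set \<Rightarrow> complex^'n \<Rightarrow> complex^'n \<Rightarrow> complex^'n \<Rightarrow> complex^'n" where
  "orbit_transfer G z y x = (SOME f. f \<in> G \<and> f z = x) y"

context
  fixes G :: "(complex^'n \<Rightarrow> complex^'n) set" and z y :: "complex^'n" and K :: real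
  assumes control: "\<forall>f\<in>G. \<forall>g\<in>G. dist (f y) (g y) \<le> K * dist (f z) (g z)"
begin

lemma orbit_transfer_apply:
  assumes f: "f \<in> G"
  shows "orbit_transfer G z y (f z) = f y"
proof -
  let ?g = "SOME g. g \<in> G \<and> g z = f z"
  have g: "?g \<in> G \<and> ?g z = f z" by (rule someI[of _ f]) (use f in simp)
  have "dist (?g y) (f y) \<le> 0" using control g f by fastforce
  then show ?thesis unfolding orbit_transfer_def by simp
qed

lemma orbit_transfer_image: "orbit_transfer G z y ` orbit G z = orbit G y"
  unfolding orbit_def by (auto simp: image_iff) (metis orbit_transfer_apply)+

lemma orbit_transfer_lipschitz:
  assumes "0 \<le> K"
  shows "K-lipschitz_on (orbit G z) (orbit_transfer G z y)"
proof (rule lipschitz_onI)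
  fix x x' assume "x \<in> orbit G z" "x' \<in> orbit G z"
  then obtain f g where fg: "f \<in> G" "x = f z" "g \<in> G" "x' = g z" unfolding orbit_def by blast
  then have "dist (orbit_transfer G z y x) (orbit_transfer G z y x') = dist (f y) (g y)"
    by (simp add: orbit_transfer_apply)
  also have "\<dots> \<le> K * dist x x'" using control fg by blast
  finally show "dist (orbit_transfer G z y x) (orbit_transfer G z y x') \<le> K * dist x x'" .
qed (rule assms)

end

lemma orbits_homeomorphic:
  assumes "0 \<le> K" "0 \<le> K'"
    and zy: "\<forall>f\<in>G. \<forall>g\<in>G. dist (f y) (g y) \<le> K * dist (f z) (g z)"
    and yz: "\<forall>f\<in>G. \<forall>g\<in>G. dist (f z) (g z) \<le> K' * dist (f y) (g y)"
  shows "orbit G z homeomorphic orbit G y"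
  unfolding homeomorphic_def homeomorphism_def
proof (intro exI conjI)
  show "continuous_on (orbit G z) (orbit_transfer G z y)"
    using lipschitz_on_continuous_on orbit_transfer_lipschitz[OF zy assms(1)] by blast
  show "continuous_on (orbit G y) (orbit_transfer G y z)"
    using lipschitz_on_continuous_on orbit_transfer_lipschitz[OF yz assms(2)] by blast
  show "orbit_transfer G z y ` orbit G z = orbit G y" by (rule orbit_transfer_image[OF zy])
  show "orbit_transfer G y z ` orbit G y = orbit G z" by (rule orbit_transfer_image[OF yz])
  show "\<forall>x\<in>orbit G z. orbit_transfer G y z (orbit_transfer G z y x) = x"
    unfolding orbit_def using orbit_transfer_apply[OF zy] orbit_transfer_apply[OF yz] by auto
  show "\<forall>x\<in>orbit G y. orbit_transfer G z y (orbit_transfer G y z x) = x"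
    unfolding orbit_def using orbit_transfer_apply[OF zy] orbit_transfer_apply[OF yz] by auto
qed


section \<open>Subgroups of H(n,C)\<close>

locale homothety_group =
  fixes G :: "(complex^'n \<Rightarrow> complex^'n) set"
  assumes subgroup: "is_subgroup_H G"
begin

lemma elementE:
  assumes "f \<in> G"
  obtains l b where "l \<noteq> 0" "f = homothety l b"
  using assms subgroup homothety_mapsE unfolding is_subgroup_H_def by blast

lemma comp_closed: "f \<in> G \<Longrightarrow> g \<in> G \<Longrightarrow> f \<circ> g \<in> G"
  using subgroup unfolding is_subgroup_H_def by blast

lemma inv_closed: "f \<in> G \<Longrightarrow> inv f \<in> G"
  using subgroup unfolding is_subgroup_H_def by blast

lemma id_closed: "id \<in> G"
  using subgroup unfolding is_subgroup_H_def by blast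

lemma funpow_closed: "f \<in> G \<Longrightarrow> f ^^ k \<in> G"
  by (induction k) (simp_all add: id_closed comp_closed)

lemma centersI: "f \<in> G \<Longrightarrow> ratio f \<noteq> 1 \<Longrightarrow> f c = c \<Longrightarrow> c \<in> centers G"
  unfolding centers_def transl_maps_def by blast

lemma centersE:
  assumes "c \<in> centers G"
  obtains l b where "l \<noteq> 0" "l \<noteq> 1" "homothety l b \<in> G" "homothety l b c = c"
proof -
  obtain f where f: "f \<in> G" "f \<notin> transl_maps" "f c = c"
    using assms unfolding centers_def by blast
  obtain l b where lb: "l \<noteq> 0" "f = homothety l b" using elementE f(1) by blast
  have "f \<in> homothety_maps" using subgroup f(1) unfolding is_subgroup_H_def by blast
  then have "l \<noteq> 1" using f(2) lb unfolding transl_maps_def by auto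
  then show ?thesis using that lb f by blast
qed

(* Conjugating by f moves centers to centers: f c is the center of f \<circ> h \<circ> inv f. *)
lemma center_image: "f \<in> G \<Longrightarrow> c \<in> centers G \<Longrightarrow> f c \<in> centers G"
proof -
  assume f: "f \<in> G" and c: "c \<in> centers G"
  obtain l b where lb: "l \<noteq> 0" "l \<noteq> 1" "homothety l b \<in> G" "homothety l b c = c"
    using centersE c by blast
  obtain m e where me: "m \<noteq> 0" "f = homothety m e" using elementE f by blast
  let ?h = "f \<circ> homothety l b \<circ> inv f"
  have h: "?h \<in> G" using comp_closed inv_closed f lb(3) by blast
  have "?h = homothety l (m *s (l *s (- ((1 / m) *s e)) + b) + e)"
    by (rule ext) (simp add: me homothety_inv vec_eq_iff field_simps)
  then have ratio: "ratio ?h \<noteq> 1" using lb by simp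
  have "inv f (f c) = c" using me by (simp add: homothety_inv vec_eq_iff field_simps)
  then have "?h (f c) = f c" using lb(4) by simp
  then show ?thesis using centersI[OF h ratio] by blast
qed

lemma E_G_invariant: "f \<in> G \<Longrightarrow> f ` E_G G \<subseteq> E_G G"
proof -
  assume f: "f \<in> G"
  obtain m e where me: "f = homothety m e" using elementE f by blast
  let ?A = "{x. f x \<in> E_G G}"
  have "complex_affine ?A"
    unfolding complex_affine_def
  proof (intro ballI allI)
    fix x y u assume "x \<in> ?A" "y \<in> ?A"
    then have "(1 - u) *s f x + u *s f y \<in> E_G G"
      using E_G_complex_affine unfolding complex_affine_def by blast
    moreover have "f ((1 - u) *s x + u *s y) = (1 - u) *s f x + u *s f y"
      by (simp add: me vec_eq_iff field_simps)
    ultimately show "(1 - u) *s x + u *s y \<in> ?A" by simp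
  qed
  moreover have "centers G \<subseteq> ?A" using center_image f centers_subset_E_G by blast
  ultimately have "E_G G \<subseteq> ?A" by (rule E_G_least)
  then show ?thesis by blast
qed

(* An element with non-real ratio is not a translation, so it has a center. *)
lemma E_G_nonempty:
  assumes "\<not> ratios G \<subseteq> \<real>"
  shows "E_G G \<noteq> {}"
proof -
  obtain f where f: "f \<in> G" "ratio f \<notin> \<real>" using assms unfolding ratios_def by blast
  obtain l b where lb: "f = homothety l b" using elementE f(1) by blast
  have l: "l \<noteq> 1" using f(2) lb by auto
  then obtain c where b: "b = (1 - l) *s c" by (rule homothety_centered)
  have "f c = c" unfolding lb b by (rule homothety_fixes_center)
  then have "c \<in> centers G" using centersI[OF f(1)] lb l by simp
  then show ?thesis using centers_subset_E_G by blast
qed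

lemma closure_orbit_subset:
  assumes "y \<in> closure (orbit G x)"
  shows "closure (orbit G y) \<subseteq> closure (orbit G x)"
proof (rule closure_minimal)
  show "orbit G y \<subseteq> closure (orbit G x)"
  proof
    fix u assume "u \<in> orbit G y"
    then obtain f where f: "f \<in> G" "u = f y" unfolding orbit_def by blast
    obtain l b where lb: "f = homothety l b" using elementE f(1) by blast
    have "f ` orbit G x \<subseteq> orbit G x"
      unfolding orbit_def using comp_closed[OF f(1)] by (auto intro: exI[of _ "f \<circ> _"])
    then have "f ` closure (orbit G x) \<subseteq> closure (orbit G x)"
      using closure_subset unfolding lb
      by (intro image_closure_subset continuous_on_homothety) auto
    then show "u \<in> closure (orbit G x)" using assms f by blast
  qed
qed simp


section \<open>Distance to E_G\<close>

lemma infdist_image_le: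
  assumes f: "f \<in> G" and ne: "E_G G \<noteq> {}"
  shows "infdist (f x) (E_G G) \<le> norm (ratio f) * infdist x (E_G G)"
proof -
  obtain l b where lb: "l \<noteq> 0" "f = homothety l b" using elementE f by blast
  have "infdist (f x) (E_G G) / norm l \<le> infdist x (E_G G)"
    unfolding infdist_notempty[OF ne, of x]
  proof (rule cINF_greatest[OF ne])
    fix a assume "a \<in> E_G G"
    then have "f a \<in> E_G G" using E_G_invariant[OF f] by blast
    then have "infdist (f x) (E_G G) \<le> norm l * dist x a"
      using infdist_le dist_homothety lb(2) by metis
    then show "infdist (f x) (E_G G) / norm l \<le> dist x a" using lb by (simp add: field_simps)
  qed
  then show ?thesis using lb by (simp add: field_simps)
qed

lemma coincidence_point:
  assumes f: "f \<in> G" and g: "g \<in> G" and ratios: "ratio f \<noteq> ratio g"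
  obtains p where "p \<in> E_G G" "\<And>x. dist (f x) (g x) = norm (ratio g - ratio f) * dist x p"
proof -
  obtain l b where lb: "l \<noteq> 0" "f = homothety l b" using elementE f by blast
  obtain m c where mc: "m \<noteq> 0" "g = homothety m c" using elementE g by blast
  have lm: "l \<noteq> m" using ratios lb mc by simp
  define p where "p = (1 / (m - l)) *s (b - c)"
  have diff: "g x - f x = (m - l) *s (x - p)" for x
    using lm unfolding lb mc p_def by (simp add: vec_eq_iff field_simps)
  have h: "inv f \<circ> g \<in> G" using comp_closed inv_closed f g by blast
  have "inv f \<circ> g = homothety (m / l) ((1 / l) *s (c - b))"
    by (rule ext) (simp add: lb mc homothety_inv vec_eq_iff field_simps)
  then have "ratio (inv f \<circ> g) \<noteq> 1" using lm lb by simp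
  moreover have "(inv f \<circ> g) p = p"
    using diff[of p] lb by (simp add: homothety_inv vec_eq_iff field_simps)
  ultimately have "p \<in> E_G G" using centersI[OF h] centers_subset_E_G by blast
  have ratios_diff: "ratio g - ratio f = m - l" using lb mc by simp
  have "dist (f x) (g x) = norm (ratio g - ratio f) * dist x p" for x
    unfolding ratios_diff using diff[of x] by (metis dist_commute dist_norm norm_smult)
  with \<open>p \<in> E_G G\<close> show ?thesis using that by blast
qed

lemma dist_orbit_le:
  assumes z: "z \<notin> E_G G" and ne: "E_G G \<noteq> {}" and f: "f \<in> G" and g: "g \<in> G"
  shows "dist (f y) (g y) \<le> (1 + dist y z / infdist z (E_G G)) * dist (f z) (g z)"
proof -
  define dz where "dz = infdist z (E_G G)"
  have dz: "dz > 0" unfolding dz_def using infdist_pos_not_in_closed[OF closed_E_G ne z] .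
  show ?thesis
  proof (cases "ratio f = ratio g")
    case True
    obtain l b where lb: "f = homothety l b" using elementE f by blast
    obtain m c where mc: "g = homothety m c" using elementE g by blast
    have "f y - g y = f z - g z" using True lb mc by (simp add: vec_eq_iff)
    then have "dist (f y) (g y) = 1 * dist (f z) (g z)" by (simp add: dist_norm)
    also have "\<dots> \<le> (1 + dist y z / dz) * dist (f z) (g z)"
      using dz by (intro mult_right_mono) simp_all
    finally show ?thesis unfolding dz_def .
  next
    case False
    then obtain p where p: "p \<in> E_G G"
      and dfg: "\<And>x. dist (f x) (g x) = norm (ratio g - ratio f) * dist x p"
      using coincidence_point f g by blast
    let ?r = "norm (ratio g - ratio f)"
    have "dz \<le> dist z p" unfolding dz_def using p by (rule infdist_le)
    then have "?r * dz \<le> dist (f z) (g z)" using dfg by (simp add: mult_left_mono)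
    then have r: "?r \<le> dist (f z) (g z) / dz" using dz by (simp add: field_simps)
    have "dist (f y) (g y) \<le> ?r * (dist y z + dist z p)"
      using dfg[of y] dist_triangle[of y p z] by (simp add: mult_left_mono)
    also have "\<dots> = ?r * dist y z + dist (f z) (g z)" using dfg[of z] by (simp add: algebra_simps)
    also have "\<dots> \<le> dist (f z) (g z) / dz * dist y z + dist (f z) (g z)"
      using mult_right_mono[OF r zero_le_dist[of y z]] by simp
    also have "\<dots> = (1 + dist y z / dz) * dist (f z) (g z)" by (simp add: algebra_simps)
    finally show ?thesis unfolding dz_def .
  qed
qed

lemma orbits_homeomorphic_off_E_G:
  assumes "E_G G \<noteq> {}" "z \<notin> E_G G" "y \<notin> E_G G"
  shows "orbit G z homeomorphic orbit G y"
proof (rule orbits_homeomorphic)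
  show "0 \<le> 1 + dist y z / infdist z (E_G G)" "0 \<le> 1 + dist z y / infdist y (E_G G)"
    by (simp_all add: infdist_nonneg)
  show "\<forall>f\<in>G. \<forall>g\<in>G. dist (f y) (g y) \<le> (1 + dist y z / infdist z (E_G G)) * dist (f z) (g z)"
    using dist_orbit_le assms by blast
  show "\<forall>f\<in>G. \<forall>g\<in>G. dist (f z) (g z) \<le> (1 + dist z y / infdist y (E_G G)) * dist (f y) (g y)"
    using dist_orbit_le assms by blast
qed

(* If f z is close to w \<notin> E_G, then |ratio f| is bounded below in terms of d(w, E_G),
   so inv f w is close to z. *)
lemma return_to_orbit:
  assumes z: "z \<notin> E_G G" and ne: "E_G G \<noteq> {}"
    and w: "w \<in> closure (orbit G z)" "w \<notin> E_G G"
  shows "z \<in> closure (orbit G w)"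
  unfolding closure_approachable
proof (intro allI impI)
  fix e :: real assume e: "e > 0"
  define dz where "dz = infdist z (E_G G)"
  have dz: "dz > 0" unfolding dz_def using infdist_pos_not_in_closed[OF closed_E_G ne z] .
  define dw where "dw = infdist w (E_G G)"
  have dw: "dw > 0" unfolding dw_def using infdist_pos_not_in_closed[OF closed_E_G ne w(2)] .
  define \<epsilon> where "\<epsilon> = min (dw / 2) (e * dw / (2 * dz))"
  have "\<epsilon> > 0" unfolding \<epsilon>_def using dz dw e by simp
  then obtain f where f: "f \<in> G" "dist (f z) w < \<epsilon>"
    using w(1) unfolding closure_approachable orbit_def by blast
  obtain l b where lb: "l \<noteq> 0" "f = homothety l b" using elementE f(1) by blast
  have "dw \<le> infdist (f z) (E_G G) + dist w (f z)" unfolding dw_def by (rule infdist_triangle)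
  moreover have "infdist (f z) (E_G G) \<le> norm l * dz"
    unfolding dz_def using infdist_image_le[OF f(1) ne] lb by simp
  moreover have "dist w (f z) < dw / 2" using f(2) unfolding \<epsilon>_def by (simp add: dist_commute)
  ultimately have l: "norm l * dz > dw / 2" by simp
  have "inv f w \<in> orbit G w" unfolding orbit_def using inv_closed[OF f(1)] by blast
  moreover have "dist (inv f w) z < e"
  proof -
    have "inv f (f z) = z" using lb by (simp add: homothety_inv vec_eq_iff field_simps)
    then have "dist (inv f w) z = norm (1 / l) * dist w (f z)"
      using dist_homothety homothety_inv[OF lb(1)] lb(2) by metis
    also have "\<dots> = dist w (f z) / norm l" by (simp add: norm_divide)
    also have "\<dots> < e"
    proof -
      have "dist w (f z) < e * dw / (2 * dz)" using f(2) unfolding \<epsilon>_def by (simp add: dist_commute)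
      also have "\<dots> < e * norm l" using l e dz by (simp add: field_simps)
      finally show ?thesis using lb by (simp add: field_simps)
    qed
    finally show ?thesis .
  qed
  ultimately show "\<exists>y\<in>orbit G w. dist y z < e" by blast
qed

lemma closure_orbit_eq_off_E_G:
  assumes "E_G G \<noteq> {}" "z \<notin> E_G G" "w \<in> closure (orbit G z)" "w \<notin> E_G G"
  shows "closure (orbit G w) = closure (orbit G z)"
  using closure_orbit_subset return_to_orbit[OF assms(2,1,3,4)] assms(3) by blast


section \<open>The closure of the translation vectors\<close>

definition transl_vectors :: "(complex^'n) set" where
  "transl_vectors = {t. homothety 1 t \<in> G}"

definition transl_closure :: "(complex^'n) set" where
  "transl_closure = closure transl_vectors"

definition multipliers :: "complex set" where
  "multipliers = {a. \<forall>d\<in>transl_closure. a *s d \<in> transl_closure}"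

lemma transl_vectors_add: "s \<in> transl_vectors \<Longrightarrow> t \<in> transl_vectors \<Longrightarrow> s + t \<in> transl_vectors"
  unfolding transl_vectors_def using comp_closed by (fastforce simp: homothety_comp)

lemma transl_vectors_neg: "t \<in> transl_vectors \<Longrightarrow> - t \<in> transl_vectors"
  unfolding transl_vectors_def using inv_closed by (fastforce simp: homothety_inv)

(* Conjugating the translation by t with an element of ratio l gives the translation by l t. *)
lemma transl_vectors_conj:
  assumes t: "t \<in> transl_vectors" and h: "homothety l b \<in> G" and l: "l \<noteq> 0"
  shows "l *s t \<in> transl_vectors"
proof -
  have "homothety l b \<circ> homothety 1 t \<circ> inv (homothety l b) \<in> G"
    using t h comp_closed inv_closed unfolding transl_vectors_def by blast
  moreover have "homothety l b \<circ> homothety 1 t \<circ> inv (homothety l b) = homothety 1 (l *s t)"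
    by (rule ext) (simp add: l homothety_inv vec_eq_iff field_simps)
  ultimately show ?thesis unfolding transl_vectors_def by simp
qed

lemma commutator_transl:
  assumes "homothety l b \<in> G" "homothety m c \<in> G" "l \<noteq> 0" "m \<noteq> 0"
  shows "(1 - m) *s b - (1 - l) *s c \<in> transl_vectors"
proof -
  let ?f = "homothety l b" and ?g = "homothety m c"
  have "?f \<circ> ?g \<circ> inv ?f \<circ> inv ?g \<in> G" using assms comp_closed inv_closed by blast
  moreover have "?f \<circ> ?g \<circ> inv ?f \<circ> inv ?g = homothety 1 ((1 - m) *s b - (1 - l) *s c)"
    by (rule ext) (simp add: assms homothety_inv vec_eq_iff field_simps)
  ultimately show ?thesis unfolding transl_vectors_def by simp
qed

lemma transl_vectors_subset: "transl_vectors \<subseteq> transl_closure"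
  unfolding transl_closure_def by (rule closure_subset)

lemma transl_closure_preserved:
  assumes "continuous_on UNIV \<phi>" "\<phi> ` transl_vectors \<subseteq> transl_closure"
  shows "\<phi> ` transl_closure \<subseteq> transl_closure"
  unfolding transl_closure_def
  using assms continuous_on_subset[OF assms(1)]
  by (intro image_closure_subset) (auto simp: transl_closure_def)

lemma transl_closure_add:
  assumes s: "s \<in> transl_closure" and t: "t \<in> transl_closure"
  shows "s + t \<in> transl_closure"
proof -
  have "(\<lambda>t. s' + t) ` transl_closure \<subseteq> transl_closure" if "s' \<in> transl_vectors" for s'
    using that transl_vectors_add transl_vectors_subset
    by (intro transl_closure_preserved continuous_intros) blast
  then have "(\<lambda>s. s + t) ` transl_closure \<subseteq> transl_closure"
    using t by (intro transl_closure_preserved continuous_intros) blast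
  then show ?thesis using s by blast
qed

lemma transl_closure_smult:
  assumes "\<And>t. t \<in> transl_vectors \<Longrightarrow> a *s t \<in> transl_vectors" "d \<in> transl_closure"
  shows "a *s d \<in> transl_closure"
proof -
  have "(\<lambda>t. a *s t) ` transl_closure \<subseteq> transl_closure"
    using assms(1) transl_vectors_subset by (intro transl_closure_preserved continuous_intros) blast
  then show ?thesis using assms(2) by blast
qed

lemma ratio_multiplier: "homothety l b \<in> G \<Longrightarrow> l \<noteq> 0 \<Longrightarrow> l \<in> multipliers"
  unfolding multipliers_def using transl_closure_smult transl_vectors_conj by blast

lemma multipliers_one: "1 \<in> multipliers"
  unfolding multipliers_def by simp

lemma multipliers_add: "a \<in> multipliers \<Longrightarrow> b \<in> multipliers \<Longrightarrow> a + b \<in> multipliers"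
  unfolding multipliers_def by (simp add: vector_sadd_rdistrib transl_closure_add)

lemma multipliers_mult:
  assumes "a \<in> multipliers" "b \<in> multipliers"
  shows "a * b \<in> multipliers"
  unfolding multipliers_def mem_Collect_eq
proof
  fix d assume "d \<in> transl_closure"
  then have "a *s (b *s d) \<in> transl_closure" using assms unfolding multipliers_def by blast
  then show "(a * b) *s d \<in> transl_closure" by simp
qed

lemma multipliers_uminus: "a \<in> multipliers \<Longrightarrow> - a \<in> multipliers"
proof -
  assume a: "a \<in> multipliers"
  have "(-1) *s d \<in> transl_closure" if "d \<in> transl_closure" for d
    using that transl_vectors_neg
    by (intro transl_closure_smult) (simp_all add: vector_sneg_minus1[symmetric])
  then have "-1 \<in> multipliers" unfolding multipliers_def by blast
  then have "(-1) * a \<in> multipliers" using multipliers_mult[OF _ a] by blast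
  then show ?thesis by simp
qed

lemma multipliers_of_int:
  assumes a: "a \<in> multipliers"
  shows "of_int k * a \<in> multipliers"
proof (induction k rule: int_induct[where k = 0])
  case base
  have "a + - a \<in> multipliers" using a multipliers_add multipliers_uminus by blast
  then show ?case by simp
next
  case (step1 i)
  have "of_int i * a + a \<in> multipliers" using multipliers_add step1 a by blast
  moreover have "of_int (i + 1) * a = of_int i * a + a" by (simp add: algebra_simps)
  ultimately show ?case by metis
next
  case (step2 i)
  have "of_int i * a + - a \<in> multipliers" using multipliers_add multipliers_uminus step2 a by blast
  moreover have "of_int (i - 1) * a = of_int i * a + - a" by (simp add: algebra_simps)
  ultimately show ?case by metis
qed

lemma multipliers_power: "a \<in> multipliers \<Longrightarrow> a ^ k \<in> multipliers"
  by (induction k) (simp_all add: multipliers_one multipliers_mult)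

lemma multipliers_dense:
  assumes nu: "\<nu> \<in> multipliers" "\<nu> \<noteq> 0" "norm \<nu> < 1"
    and lam: "lam \<in> multipliers" "Im lam \<noteq> 0"
  shows "closure multipliers = UNIV"
  using multipliers_add multipliers_mult multipliers_of_int multipliers_power[OF nu(1)] nu(2,3) lam
  by (rule dense_complex_lattice)

lemma transl_closure_complex_subspace:
  assumes "closure multipliers = UNIV" "d \<in> transl_closure"
  shows "a *s d \<in> transl_closure"
proof -
  have "(\<lambda>r. r *s d) ` closure multipliers \<subseteq> transl_closure"
    using assms(2) unfolding multipliers_def transl_closure_def
    by (intro image_closure_subset continuous_intros) auto
  then show ?thesis using assms(1) by blast
qed

(* Commutators show that differences of centers lie in transl_closure. *)
lemma center_difference:
  assumes subspace: "\<And>a d. d \<in> transl_closure \<Longrightarrow> a *s d \<in> transl_closure"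
    and c: "c \<in> centers G" and c': "c' \<in> centers G"
  shows "c - c' \<in> transl_closure"
proof -
  obtain l b where lb: "l \<noteq> 0" "l \<noteq> 1" "homothety l b \<in> G" "homothety l b c = c"
    using centersE c by blast
  obtain m b' where mb: "m \<noteq> 0" "m \<noteq> 1" "homothety m b' \<in> G" "homothety m b' c' = c'"
    using centersE c' by blast
  have b: "b = (1 - l) *s c" and b': "b' = (1 - m) *s c'"
    using lb(4) mb(4) by (simp_all add: vec_eq_iff algebra_simps)
  define k where "k = (1 - l) * (1 - m)"
  have k: "k \<noteq> 0" unfolding k_def using lb(2) mb(2) by simp
  have "(1 - m) *s b - (1 - l) *s b' = k *s (c - c')"
    unfolding b b' k_def by (simp add: vec_eq_iff algebra_simps)
  then have "k *s (c - c') \<in> transl_closure"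
    using commutator_transl[OF lb(3) mb(3) lb(1) mb(1)] transl_vectors_subset by auto
  then have "(1 / k) *s (k *s (c - c')) \<in> transl_closure" by (rule subspace)
  then show ?thesis using k by (simp add: vector_smult_assoc)
qed

lemma E_G_subset_translate:
  assumes subspace: "\<And>a d. d \<in> transl_closure \<Longrightarrow> a *s d \<in> transl_closure"
    and c: "c \<in> centers G" and x: "x \<in> E_G G"
  shows "x - c \<in> transl_closure"
proof -
  have "complex_affine {x. x - c \<in> transl_closure}"
    unfolding complex_affine_def
  proof (intro ballI allI)
    fix x y u assume "x \<in> {x. x - c \<in> transl_closure}" "y \<in> {x. x - c \<in> transl_closure}"
    then have "(1 - u) *s (x - c) + u *s (y - c) \<in> transl_closure"
      by (intro transl_closure_add subspace) simp_all
    moreover have eq: "(1 - u) *s x + u *s y - c = (1 - u) *s (x - c) + u *s (y - c)"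
      by (simp add: vec_eq_iff algebra_simps)
    ultimately show "(1 - u) *s x + u *s y \<in> {x. x - c \<in> transl_closure}"
      by (simp only: mem_Collect_eq eq)
  qed
  moreover have "centers G \<subseteq> {x. x - c \<in> transl_closure}"
    using center_difference[OF subspace _ c] by blast
  ultimately show ?thesis using E_G_least x by blast
qed


section \<open>E_G is contained in every orbit closure\<close>

lemma contraction_exists:
  assumes "\<not> G \<subseteq> rot_maps"
  obtains \<nu> c where "homothety \<nu> ((1 - \<nu>) *s c) \<in> G" "\<nu> \<noteq> 0" "norm \<nu> < 1"
proof -
  have "G \<subseteq> homothety_maps" using subgroup unfolding is_subgroup_H_def by blast
  then obtain f where f: "f \<in> G" "norm (ratio f) \<noteq> 1"
    using assms unfolding rot_maps_def by blast
  obtain l b where lb: "l \<noteq> 0" "f = homothety l b" using elementE f(1) by blast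
  obtain \<nu> \<beta> where h: "homothety \<nu> \<beta> \<in> G" "\<nu> \<noteq> 0" "norm \<nu> < 1"
  proof (cases "norm l < 1")
    case True
    then show ?thesis using that f lb by blast
  next
    case False
    then have "norm (1 / l) < 1" using f lb by (simp add: norm_divide divide_less_eq)
    moreover have "homothety (1 / l) (- ((1 / l) *s b)) \<in> G"
      using inv_closed[OF f(1)] lb by (simp add: homothety_inv)
    ultimately show ?thesis using that lb by simp
  qed
  moreover have "\<nu> \<noteq> 1" using h(3) by auto
  then obtain c where "\<beta> = (1 - \<nu>) *s c" by (rule homothety_centered)
  ultimately show ?thesis using that by blast
qed

lemma E_G_subset_closure_orbit:
  assumes "\<not> G \<subseteq> rot_maps" "\<not> ratios G \<subseteq> \<real>"
  shows "E_G G \<subseteq> closure (orbit G z)"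
proof
  obtain \<nu> c where h: "homothety \<nu> ((1 - \<nu>) *s c) \<in> G" "\<nu> \<noteq> 0" "norm \<nu> < 1"
    using contraction_exists assms(1) by blast
  have "ratio (homothety \<nu> ((1 - \<nu>) *s c)) \<noteq> 1" using h(3) by auto
  then have c: "c \<in> centers G" using centersI[OF h(1)] homothety_fixes_center by blast
  obtain f where f: "f \<in> G" "ratio f \<notin> \<real>" using assms(2) unfolding ratios_def by blast
  obtain lam b where lb: "lam \<noteq> 0" "f = homothety lam b" using elementE f(1) by blast
  have "\<nu> \<in> multipliers" by (rule ratio_multiplier[OF h(1,2)])
  moreover have "lam \<in> multipliers" using ratio_multiplier f(1) lb by blast
  moreover have "Im lam \<noteq> 0" using f(2) lb by (simp add: complex_is_Real_iff)
  ultimately have "closure multipliers = UNIV" using multipliers_dense h(2,3) by blast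
  then have subspace: "\<And>a d. d \<in> transl_closure \<Longrightarrow> a *s d \<in> transl_closure"
    using transl_closure_complex_subspace by blast
  fix x assume x: "x \<in> E_G G"
  show "x \<in> closure (orbit G z)"
    unfolding closure_approachable
  proof (intro allI impI)
    fix e :: real assume e: "e > 0"
    obtain t where t: "t \<in> transl_vectors" "dist t (x - c) < e / 2"
      using E_G_subset_translate[OF subspace c x] e
      unfolding transl_closure_def closure_approachable by (meson half_gt_zero)
    obtain k where k: "norm \<nu> ^ k < e / 2 / (norm (z - c) + 1)"
      using real_arch_pow_inv[OF _ h(3), of "e / 2 / (norm (z - c) + 1)"] e
      by (auto simp: add_nonneg_pos)
    define g where "g = homothety 1 t \<circ> homothety \<nu> ((1 - \<nu>) *s c) ^^ k"
    have "g \<in> G"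
      unfolding g_def using comp_closed funpow_closed[OF h(1)] t(1)
      unfolding transl_vectors_def by blast
    moreover have "dist (g z) x < e"
    proof -
      have small: "norm \<nu> ^ k * norm (z - c) < e / 2"
      proof -
        have pos: "0 < norm (z - c) + 1" by (simp add: add_nonneg_pos)
        have "norm \<nu> ^ k * norm (z - c) \<le> norm \<nu> ^ k * (norm (z - c) + 1)"
          by (simp add: distrib_left)
        also have "\<dots> < e / 2" by (metis k pos pos_less_divide_eq)
        finally show ?thesis .
      qed
      have gz: "g z - x = (\<nu> ^ k) *s (z - c) + (t - (x - c))"
        unfolding g_def homothety_iterate by (simp add: vec_eq_iff algebra_simps)
      have "dist (g z) x \<le> norm ((\<nu> ^ k) *s (z - c)) + norm (t - (x - c))"
        unfolding dist_norm gz by (rule norm_triangle_ineq)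
      also have "\<dots> = norm \<nu> ^ k * norm (z - c) + dist t (x - c)"
        by (simp only: norm_smult norm_power dist_norm)
      finally show ?thesis using small t(2) by linarith
    qed
    ultimately show "\<exists>y\<in>orbit G z. dist y x < e" unfolding orbit_def by blast
  qed
qed

(* Part (ii): every nonempty closed invariant subset of E_G contains an orbit closure. *)
lemma minimal_set_E_G:
  assumes "\<not> G \<subseteq> rot_maps" "\<not> ratios G \<subseteq> \<real>"
  shows "minimal_set G (E_G G)"
  unfolding minimal_set_def
proof (intro conjI allI impI)
  show "E_G G \<noteq> {}" using E_G_nonempty assms(2) .
  show "closed (E_G G)" by (rule closed_E_G)
  show "invariant_set G (E_G G)" unfolding invariant_set_def using E_G_invariant by blast
  fix A assume A: "A \<noteq> {} \<and> closed A \<and> A \<subseteq> E_G G \<and> invariant_set G A"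
  then obtain a where a: "a \<in> A" by blast
  have "orbit G a \<subseteq> A" using A a unfolding orbit_def invariant_set_def by blast
  then have "closure (orbit G a) \<subseteq> A" using A closure_minimal by blast
  then show "A = E_G G" using E_G_subset_closure_orbit[OF assms, of a] A by blast
qed

end


theorem corollary1p2:
  fixes G :: "(complex^'n \<Rightarrow> complex^'n) set"
  assumes "is_subgroup_H G"
    and "\<exists>f\<in>G. \<exists>g\<in>G. f \<circ> g \<noteq> g \<circ> f"
    and "\<not> ratios G \<subseteq> \<real>"
    and "\<not> G \<subseteq> SR"
    and "UNIV - E_G G \<noteq> {}"
  shows "(\<forall>z \<in> UNIV - E_G G. \<forall>w \<in> closure (orbit G z) \<inter> (UNIV - E_G G).
            closure (orbit G w) \<inter> (UNIV - E_G G) = closure (orbit G z) \<inter> (UNIV - E_G G))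
       \<and> (\<not> G \<subseteq> rot_maps \<longrightarrow>
            minimal_set G (E_G G) \<and> (\<forall>z. E_G G \<subseteq> closure (orbit G z)))
       \<and> (\<forall>z \<in> UNIV - E_G G. \<forall>y \<in> UNIV - E_G G. orbit G z homeomorphic orbit G y)"
proof -
  interpret homothety_group G by (rule homothety_group.intro) (rule assms(1))
  have ne: "E_G G \<noteq> {}" using E_G_nonempty assms(3) .
  show ?thesis
  proof (intro conjI ballI impI allI)
    fix z w assume "z \<in> UNIV - E_G G" "w \<in> closure (orbit G z) \<inter> (UNIV - E_G G)"
    then show "closure (orbit G w) \<inter> (UNIV - E_G G) = closure (orbit G z) \<inter> (UNIV - E_G G)"
      using closure_orbit_eq_off_E_G[OF ne] by simp
  next
    assume "\<not> G \<subseteq> rot_maps"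
    then show "minimal_set G (E_G G)" "\<And>z. E_G G \<subseteq> closure (orbit G z)"
      using minimal_set_E_G E_G_subset_closure_orbit assms(3) by blast+
  next
    fix z y assume "z \<in> UNIV - E_G G" "y \<in> UNIV - E_G G"
    then show "orbit G z homeomorphic orbit G y" using orbits_homeomorphic_off_E_G[OF ne] by simp
  qed
qed

end
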